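(* Inserting $n$ values, one at a time, into an initially empty black-white array (BWA) takes $O(\log n)$ average (amortized) time per insertion.
   Context: A black-white array (BWA) of size $N=2^K$ stores values from a totally ordered set. It has a white array $W[1..N-1]$ and a black array $B[1..N/2-1]$. For $i\ge0$, the segment of rank $i$ of either array is the index block $[2^i,2^{i+1}-1]$. A state variable $\mathtt{total}$ counts stored values and is initially $0$. The rank-$i$ segment is active iff bit $i$ of $\mathtt{total}$ is $1$. Insert$(v)$: if rank 0 is inactive, set $W[1]=v$; otherwise set $B[1]=v$ and perform $\mathrm{merge}(0)$. $\mathrm{merge}(i)$: merge the sorted white and black segments of rank $i$ using a standard two-way merge, at cost proportional to the segment length. The result goes into the white rank-$(i+1)$ segment if that segment is inactive. Otherwise it goes into the black rank-$(i+1)$ segment, followed by $\mathrm{merge}(i+1)$. When an insertion completes, $\mathtt{total}$ has increased by one. *)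

theory Defs
  imports Main "HOL-Library.Landau_Symbols"
begin

text \<open>The arrays are modelled as total functions on indices;
  for N = 2^K with n \<le> N-1 insertions only the indices 1..N-1 (white) and
  1..N/2-1 (black) are ever touched, so no bound on the indices is needed.\<close>

record 'a bwa =
  wht :: "nat \<Rightarrow> 'a"
  blk :: "nat \<Rightarrow> 'a"
  total :: nat

definition seg :: "(nat \<Rightarrow> 'a) \<Rightarrow> nat \<Rightarrow> 'a list" where
  "seg A i = map A [2^i..<2^(Suc i)]"

definition write_seg :: "(nat \<Rightarrow> 'a) \<Rightarrow> nat \<Rightarrow> 'a list \<Rightarrow> (nat \<Rightarrow> 'a)" where
  "write_seg A i xs = (\<lambda>j. if 2^i \<le> j \<and> j < 2^(Suc i) then xs ! (j - 2^i) else A j)"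

definition active :: "'a bwa \<Rightarrow> nat \<Rightarrow> bool" where
  "active s i = bit (total s) i"

fun merge2 :: "'a::linorder list \<Rightarrow> 'a list \<Rightarrow> 'a list" where
  "merge2 [] ys = ys"
| "merge2 xs [] = xs"
| "merge2 (x # xs) (y # ys) =
     (if x \<le> y then x # merge2 xs (y # ys) else y # merge2 (x # xs) ys)"

text \<open>merge(i): returns the new state together with its cost. Merging two
  segments of rank i costs 2^(i+1) (the length of the merged output, i.e.
  proportional to the segment length).\<close>
function bwa_merge :: "nat \<Rightarrow> 'a::linorder bwa \<Rightarrow> 'a bwa \<times> nat" where
  "bwa_merge i s =
     (let m = merge2 (seg (wht s) i) (seg (blk s) i); c = 2 ^ Suc i in
      if \<not> active s (Suc i) then (s\<lparr>wht := write_seg (wht s) (Suc i) m\<rparr>, c)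
      else (let r = bwa_merge (Suc i) (s\<lparr>blk := write_seg (blk s) (Suc i) m\<rparr>)
            in (fst r, c + snd r)))"
  by pat_completeness auto
termination
proof (relation "measure (\<lambda>(i, s). total s div 2 ^ i)")
  fix i :: nat and s :: "'a bwa" and m c
  assume "\<not> \<not> active s (Suc i)"
  hence b: "bit (total s) (Suc i)" by (simp add: active_def)
  hence pos: "total s div 2 ^ Suc i > 0"
    by (metis bit_iff_odd div_0 gr0I even_zero)
  have "total s div 2 ^ Suc i = (total s div 2 ^ i) div 2"
    by (metis div_exp_eq power_one_right plus_1_eq_Suc add.commute)
  with pos show "((Suc i, s\<lparr>blk := write_seg (blk s) (Suc i) m\<rparr>), (i, s))
      \<in> measure (\<lambda>(i, s). total s div 2 ^ i)" by simp
qed simp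

definition bwa_insert :: "'a::linorder \<Rightarrow> 'a bwa \<Rightarrow> 'a bwa \<times> nat" where
  "bwa_insert v s =
     (if \<not> active s 0 then (s\<lparr>wht := (wht s)(1 := v), total := Suc (total s)\<rparr>, 1)
      else (let r = bwa_merge 0 (s\<lparr>blk := (blk s)(1 := v)\<rparr>)
            in ((fst r)\<lparr>total := Suc (total s)\<rparr>, 1 + snd r)))"

definition bwa_empty :: "'a bwa" where
  "bwa_empty = \<lparr>wht = (\<lambda>_. undefined), blk = (\<lambda>_. undefined), total = 0\<rparr>"

fun insert_all :: "'a::linorder list \<Rightarrow> 'a bwa \<Rightarrow> 'a bwa \<times> nat" where
  "insert_all [] s = (s, 0)"
| "insert_all (v # vs) s =
     (let r = bwa_insert v s; r' = insert_all vs (fst r) in (fst r', snd r + snd r'))"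

end

theory Submission
  imports Defs "HOL-Library.Discrete_Functions"
begin

text \<open>The cost of an insertion depends only on the number t of stored values: the cascade
  merges the ranks 0, ..., r - 1, where r is the number of trailing 1-bits of t, at cost
  2 + 4 + ... + 2^r, so together with the initial write it costs 2^(r+1) - 1. Hence the cost
  c(t) satisfies c(2t) = 1 and c(2t+1) = 2 c(t) + 1, and the total cost S(n) of n insertions
  satisfies S(2m) = 2m + 2 S(m). This halving recurrence gives S(n) \<le> n (2k + 1) whenever
  n \<le> 2^k, i.e. an average cost of O(log n).\<close>

function insert_cost :: "nat \<Rightarrow> nat" where
  "insert_cost t = (if even t then 1 else 2 * insert_cost (t div 2) + 1)"
  by auto
termination
  by (relation "measure id") (auto elim: oddE)

declare insert_cost.simps [simp del]

lemma insert_cost_even: "even t \<Longrightarrow> insert_cost t = 1"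
  by (simp add: insert_cost.simps)

lemma insert_cost_odd: "odd t \<Longrightarrow> insert_cost t = 2 * insert_cost (t div 2) + 1"
  by (simp add: insert_cost.simps)

lemma cost_bwa_merge:
  "snd (bwa_merge i s) = 2 ^ Suc i * insert_cost (total s div 2 ^ Suc i)"
proof (induction i s rule: bwa_merge.induct)
  case (1 i s)
  define q where "q = total s div 2 ^ Suc i"
  have active_iff: "active s (Suc i) \<longleftrightarrow> odd q"
    by (simp add: q_def active_def bit_iff_odd)
  have half: "total s div 2 ^ Suc (Suc i) = q div 2"
    using div_exp_eq [of "total s" "Suc i" 1] by (simp add: q_def)
  show ?case
  proof (cases "active s (Suc i)")
    case True
    then have "snd (bwa_merge i s) = 2 ^ Suc i + 2 ^ Suc (Suc i) * insert_cost (q div 2)"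
      using "1" half by (subst bwa_merge.simps) (simp add: Let_def)
    also have "\<dots> = 2 ^ Suc i * insert_cost q"
      using True active_iff by (simp add: insert_cost_odd algebra_simps)
    finally show ?thesis by (simp add: q_def)
  next
    case False
    then show ?thesis
      using active_iff by (subst bwa_merge.simps) (simp add: q_def insert_cost_even)
  qed
qed

lemma total_bwa_insert: "total (fst (bwa_insert v s)) = Suc (total s)"
  by (simp add: bwa_insert_def Let_def)

lemma cost_bwa_insert: "snd (bwa_insert v s) = insert_cost (total s)"
  using cost_bwa_merge [of 0 "s\<lparr>blk := (blk s)(1 := v)\<rparr>"]
  by (simp add: bwa_insert_def Let_def active_def bit_0 insert_cost_even insert_cost_odd)

lemma cost_insert_all:
  "snd (insert_all vs s) = (\<Sum>j<length vs. insert_cost (total s + j))"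
proof (induction vs arbitrary: s)
  case Nil
  show ?case by simp
next
  case (Cons v vs)
  show ?case
    using Cons.IH [of "fst (bwa_insert v s)"]
    by (simp add: Let_def total_bwa_insert cost_bwa_insert sum.lessThan_Suc_shift
        del: sum.lessThan_Suc)
qed

lemma cost_insert_all_empty:
  "snd (insert_all vs bwa_empty) = (\<Sum>t<length vs. insert_cost t)"
  by (simp add: cost_insert_all bwa_empty_def)

lemma sum_lessThan_double:
  fixes f :: "nat \<Rightarrow> 'a::comm_monoid_add"
  shows "(\<Sum>t<2 * m. f t) = (\<Sum>t<m. f (2 * t) + f (2 * t + 1))"
  by (induction m) (simp_all add: ac_simps)

lemma sum_insert_cost_double:
  "(\<Sum>t<2 * m. insert_cost t) = 2 * m + 2 * (\<Sum>t<m. insert_cost t)"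
proof -
  have "insert_cost (2 * t) + insert_cost (2 * t + 1) = 2 + 2 * insert_cost t" for t
    by (simp add: insert_cost_even insert_cost_odd)
  then show ?thesis
    by (simp only: sum_lessThan_double sum.distrib sum_distrib_left) simp
qed

lemma sum_insert_cost_le:
  "n \<le> 2 ^ k \<Longrightarrow> (\<Sum>t<n. insert_cost t) \<le> n * (2 * k + 1)"
proof (induction k arbitrary: n)
  case 0
  then consider "n = 0" | "n = 1" by fastforce
  then show ?case by cases (simp_all add: insert_cost_even)
next
  case (Suc k)
  define m where "m = n div 2"
  have "m \<le> 2 ^ k"
    using Suc.prems by (simp add: m_def)
  then have "(\<Sum>t<m. insert_cost t) \<le> m * (2 * k + 1)"
    by (rule Suc.IH)
  then have even_bound: "(\<Sum>t<2 * m. insert_cost t) \<le> 2 * m * (2 * Suc k)"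
    unfolding sum_insert_cost_double by (simp add: algebra_simps)
  show ?case
  proof (cases "even n")
    case True
    then have "n = 2 * m" by (simp add: m_def)
    with even_bound show ?thesis by (simp add: algebra_simps)
  next
    case False
    then have "n = Suc (2 * m)" by (simp add: m_def)
    with even_bound show ?thesis by (simp add: insert_cost_even algebra_simps)
  qed
qed

lemma average_insert_cost_le_log:
  assumes "n \<ge> 2"
  shows "real (\<Sum>t<n. insert_cost t) / real n \<le> 5 * log 2 (real n)"
proof -
  define k where "k = floor_log n"
  define S where "S = (\<Sum>t<n. insert_cost t)"
  have "n \<le> 2 ^ Suc k"
    using floor_log_exp2_gt [of n] by (simp add: k_def)
  then have "S \<le> n * (2 * k + 3)"
    using sum_insert_cost_le [of n "Suc k"] by (simp add: S_def algebra_simps)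
  then have "real S \<le> real n * (2 * real k + 3)"
    by (simp add: of_nat_le_iff [symmetric, where 'a=real])
  moreover have "real k \<le> log 2 (real n)"
    using assms floor_log_exp2_le [of n] by (simp add: k_def le_log2_of_power)
  moreover have "1 \<le> log 2 (real n)"
    using le_log2_of_power [of 1 n] assms by simp
  ultimately have "real S \<le> real n * (5 * log 2 (real n))"
    by (smt (verit) mult_left_mono of_nat_0_le_iff)
  then show ?thesis
    using assms by (simp add: S_def pos_divide_le_eq mult.commute)
qed

theorem mainTheorem7:
  "\<exists>C::real. \<forall>vs :: 'a::linorder list. length vs \<ge> 2 \<longrightarrow>
     real (snd (insert_all vs bwa_empty)) / real (length vs)
       \<le> C * ln (real (length vs))"
proof (intro exI allI impI)
  fix vs :: "'a list"
  assume "length vs \<ge> 2"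
  then show "real (snd (insert_all vs bwa_empty)) / real (length vs)
      \<le> (5 / ln 2) * ln (real (length vs))"
    using average_insert_cost_le_log [of "length vs"]
    by (simp add: cost_insert_all_empty log_def)
qed

end
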